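(* Let $Q,\tau$ be positive even integers and let $A$ and $Z$ be $0$-$1$ matrices of dimensions $\frac{Q}{2}\times\frac{\tau}{2}$, where $A$ is fixed and the entries of $Z$ are i.i.d. $0$-$1$ random variables with $\mathbb{E}(z_{ij})=\lambda$. If $\lambda<\frac{2}{\tau}$, then $$\mathbb{E}\big(w(I(A\wedge Z))\big)\ge\frac{\lambda}{2}\cdot w(A).$$
   Context: For a $0$-$1$ matrix $X$, $w(X)$ denotes the number of entries equal to $1$. $I(X)$ is the $0$-$1$ matrix of the same dimensions that keeps only the first nonzero entry in each row of $X$: $I(X)_{i,j}=1$ iff $X_{i,j}=1$ and $X_{i,\ell}=0$ for every $\ell<j$, and $I(X)_{i,j}=0$ otherwise. $A\wedge Z$ is the coordinate-wise conjunction (product) of $A$ and $Z$. *)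

theory Defs
  imports "HOL-Probability.Probability"
begin

text \<open>A 0-1 matrix of dimensions m x n is represented as a function
  nat \<times> nat \<Rightarrow> bool; only entries (i,j) with i < m, j < n are relevant.\<close>

definition weight :: "nat \<Rightarrow> nat \<Rightarrow> (nat \<times> nat \<Rightarrow> bool) \<Rightarrow> nat" where
  "weight m n X = card {(i, j). i < m \<and> j < n \<and> X (i, j)}"

definition first_ones :: "(nat \<times> nat \<Rightarrow> bool) \<Rightarrow> (nat \<times> nat \<Rightarrow> bool)" where
  "first_ones X = (\<lambda>(i, j). X (i, j) \<and> (\<forall>l<j. \<not> X (i, l)))"

definition mat_and :: "(nat \<times> nat \<Rightarrow> bool) \<Rightarrow> (nat \<times> nat \<Rightarrow> bool) \<Rightarrow> (nat \<times> nat \<Rightarrow> bool)" where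
  "mat_and A Z = (\<lambda>ij. A ij \<and> Z ij)"

definition random_matrix :: "nat \<Rightarrow> nat \<Rightarrow> real \<Rightarrow> (nat \<times> nat \<Rightarrow> bool) pmf" where
  "random_matrix m n p = Pi_pmf ({..<m} \<times> {..<n}) False (\<lambda>_. bernoulli_pmf p)"

end

theory Submission
  imports Defs
begin

text \<open>Row \<open>i\<close> of \<open>I(A \<and> Z)\<close> holds exactly one 1 if \<open>Z\<close> has a 1 at one of the \<open>k\<^sub>i\<close>
  positions where row \<open>i\<close> of \<open>A\<close> does, and none otherwise; so its expected weight is
  \<open>1 - (1 - \<lambda>)^k\<^sub>i\<close>. As \<open>\<lambda> k\<^sub>i \<le> \<lambda> \<tau>/2 < 1\<close>, Bernoulli's inequality gives
  \<open>(1 - \<lambda>)^k\<^sub>i \<le> 1/(1 + \<lambda> k\<^sub>i) \<le> 1 - \<lambda> k\<^sub>i/2\<close>; summing over the rows gives the bound.\<close>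

lemma half_mult_le_one_minus_power:
  fixes l :: real and k :: nat
  assumes "0 \<le> l" "l \<le> 1" "l * k \<le> 1"
  shows "l / 2 * k \<le> 1 - (1 - l) ^ k"
proof -
  have pos: "0 < 1 + k * l"
    using assms by (simp add: add_pos_nonneg)
  have "(1 - l) ^ k * (1 + k * l) \<le> (1 - l) ^ k * (1 + l) ^ k"
    using Bernoulli_inequality[of l k] assms by (intro mult_left_mono) simp_all
  also have "\<dots> = (1 - l\<^sup>2) ^ k"
    by (simp add: power_mult_distrib[symmetric] power2_eq_square algebra_simps)
  also have "\<dots> \<le> 1"
    using assms by (intro power_le_one) (auto simp: power2_eq_square mult_le_one)
  finally have "(1 - l) ^ k \<le> 1 / (1 + k * l)"
    using pos by (simp add: pos_le_divide_eq)
  moreover have "l / 2 * k \<le> 1 - 1 / (1 + k * l)"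
  proof -
    have "l / 2 * k = (k * l) / 2"
      by simp
    also have "\<dots> \<le> (k * l) / (1 + k * l)"
      using assms pos by (intro divide_left_mono) (auto simp: mult.commute)
    also have "\<dots> = 1 - 1 / (1 + k * l)"
      using pos by (simp add: field_simps)
    finally show ?thesis .
  qed
  ultimately show ?thesis by linarith
qed

lemma weight_eq_sum_rows:
  "weight m n X = (\<Sum>i<m. card {j. j < n \<and> X (i, j)})"
proof -
  have "{(i, j). i < m \<and> j < n \<and> X (i, j)} = Sigma {..<m} (\<lambda>i. {j. j < n \<and> X (i, j)})"
    by auto
  thus ?thesis unfolding weight_def by simp
qed

lemma card_row_first_ones:
  "card {j. j < n \<and> first_ones X (i, j)} = of_bool (\<exists>j<n. X (i, j))"
proof (cases "\<exists>j<n. X (i, j)")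
  case True
  then obtain j where j: "j < n" "X (i, j)" by blast
  define j0 where "j0 = (LEAST j. X (i, j))"
  have "X (i, j0)"
    unfolding j0_def using j(2) by (rule LeastI)
  have below: "\<not> X (i, l)" if "l < j0" for l
    using that unfolding j0_def by (rule not_less_Least)
  have least: "j0 \<le> x" if "X (i, x)" for x
    unfolding j0_def using that by (rule Least_le)
  have "first_ones X (i, x) \<longleftrightarrow> x = j0" for x
  proof
    assume "first_ones X (i, x)"
    then have "X (i, x)" "\<not> j0 < x"
      using \<open>X (i, j0)\<close> by (auto simp: first_ones_def)
    then show "x = j0"
      using least by (simp add: le_antisym not_less)
  qed (use \<open>X (i, j0)\<close> below in \<open>auto simp: first_ones_def\<close>)
  moreover have "j0 < n"
    using least[OF j(2)] j(1) by simp
  ultimately have "{j. j < n \<and> first_ones X (i, j)} = {j0}"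
    by auto
  with True show ?thesis by simp
qed (auto simp: first_ones_def)

lemma expectation_weight_first_ones:
  fixes M :: "'a pmf" and X :: "'a \<Rightarrow> nat \<times> nat \<Rightarrow> bool"
  shows "measure_pmf.expectation M (\<lambda>z. real (weight m n (first_ones (X z))))
           = (\<Sum>i<m. measure_pmf.prob M {z. \<exists>j<n. X z (i, j)})"
proof -
  have "real (weight m n (first_ones (X z))) = (\<Sum>i<m. indicator {z. \<exists>j<n. X z (i, j)} z)" for z
    by (simp add: weight_eq_sum_rows card_row_first_ones indicator_def)
  then show ?thesis
    by (simp add: Bochner_Integration.integral_sum integrable_indicator
                  measure_pmf.emeasure_finite less_top[symmetric])
qed

lemma prob_random_matrix_some_one:
  assumes "S \<subseteq> {..<m} \<times> {..<n}" "0 \<le> p" "p \<le> 1"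
  shows "measure_pmf.prob (random_matrix m n p) {Z. \<exists>x\<in>S. Z x} = 1 - (1 - p) ^ card S"
proof -
  define R where "R = {..<m} \<times> {..<n}"
  have fin: "finite R" unfolding R_def by simp
  have "{Z. \<forall>x\<in>S. \<not> Z x} = Pi R (\<lambda>x. if x \<in> S then {False} else UNIV)"
    using assms(1) by (auto simp: R_def Pi_def)
  then have "measure_pmf.prob (random_matrix m n p) {Z. \<forall>x\<in>S. \<not> Z x}
       = (\<Prod>x\<in>R. measure_pmf.prob (bernoulli_pmf p) (if x \<in> S then {False} else UNIV))"
    unfolding random_matrix_def R_def[symmetric] using measure_Pi_pmf_Pi[OF fin] by simp
  also have "\<dots> = (\<Prod>x\<in>R. if x \<in> S then 1 - p else 1)"
    by (intro prod.cong) (auto simp: measure_pmf_single assms)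
  also have "\<dots> = (1 - p) ^ card S"
    using assms(1) fin by (simp add: prod.If_cases R_def Int_absorb1)
  finally have "measure_pmf.prob (random_matrix m n p) {Z. \<forall>x\<in>S. \<not> Z x} = (1 - p) ^ card S" .
  moreover have "{Z. \<exists>x\<in>S. Z x} = UNIV - {Z. \<forall>x\<in>S. \<not> Z x}"
    by auto
  ultimately show ?thesis
    using measure_pmf.prob_compl[of "{Z. \<forall>x\<in>S. \<not> Z x}"] by simp
qed

lemma prob_random_matrix_row_hit:
  assumes "i < m" "0 \<le> p" "p \<le> 1"
  shows "measure_pmf.prob (random_matrix m n p) {Z. \<exists>j<n. mat_and A Z (i, j)}
           = 1 - (1 - p) ^ card {j. j < n \<and> A (i, j)}"
proof -
  define row where "row = {j. j < n \<and> A (i, j)}"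
  have row_hit_eq: "{Z. \<exists>j<n. mat_and A Z (i, j)} = {Z. \<exists>x\<in>Pair i ` row. Z x}"
    by (auto simp: mat_and_def row_def)
  have "Pair i ` row \<subseteq> {..<m} \<times> {..<n}"
    using assms(1) by (auto simp: row_def)
  then have "measure_pmf.prob (random_matrix m n p) {Z. \<exists>x\<in>Pair i ` row. Z x}
               = 1 - (1 - p) ^ card (Pair i ` row)"
    using assms(2,3) by (rule prob_random_matrix_some_one)
  moreover have "card (Pair i ` row) = card row"
    by (simp add: card_image inj_on_def)
  ultimately show ?thesis
    unfolding row_hit_eq row_def by (simp only:)
qed

theorem lemma7p2:
  fixes Q \<tau> :: nat and A :: "nat \<times> nat \<Rightarrow> bool" and lam :: real
  assumes "Q > 0" "even Q" "\<tau> > 0" "even \<tau>"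
    and "0 \<le> lam" "lam \<le> 1"
    and "lam < 2 / real \<tau>"
  shows "measure_pmf.expectation (random_matrix (Q div 2) (\<tau> div 2) lam)
           (\<lambda>Z. real (weight (Q div 2) (\<tau> div 2) (first_ones (mat_and A Z))))
         \<ge> lam / 2 * real (weight (Q div 2) (\<tau> div 2) A)"
proof -
  define m where "m = Q div 2"
  define n where "n = \<tau> div 2"
  define k where "k i = card {j. j < n \<and> A (i, j)}" for i
  have "real \<tau> = 2 * n"
    using assms(4) unfolding n_def by auto
  then have lam_n: "lam * n \<le> 1"
    using assms(3,7) by (simp add: field_simps)
  have "lam / 2 * real (weight m n A) = (\<Sum>i<m. lam / 2 * k i)"
    by (simp add: weight_eq_sum_rows sum_distrib_left k_def)
  also have "\<dots> \<le> (\<Sum>i<m. measure_pmf.prob (random_matrix m n lam)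
                                  {Z. \<exists>j<n. mat_and A Z (i, j)})"
  proof (rule sum_mono)
    fix i assume "i \<in> {..<m}"
    have "k i \<le> n"
      using card_mono[of "{..<n}" "{j. j < n \<and> A (i, j)}"] by (auto simp: k_def)
    then have "lam * k i \<le> 1"
      using lam_n assms(5) by (meson mult_left_mono of_nat_le_iff order_trans)
    then have "lam / 2 * k i \<le> 1 - (1 - lam) ^ k i"
      by (rule half_mult_le_one_minus_power[OF assms(5,6)])
    also have "\<dots> = measure_pmf.prob (random_matrix m n lam) {Z. \<exists>j<n. mat_and A Z (i, j)}"
      unfolding k_def using \<open>i \<in> {..<m}\<close> assms(5,6)
      by (intro prob_random_matrix_row_hit[symmetric]) simp_all
    finally show "lam / 2 * k i \<le> \<dots>" .
  qed
  also have "\<dots> = measure_pmf.expectation (random_matrix m n lam)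
                      (\<lambda>Z. real (weight m n (first_ones (mat_and A Z))))"
    by (rule expectation_weight_first_ones[where X = "mat_and A", symmetric])
  finally show ?thesis
    by (simp add: m_def n_def)
qed
end
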